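(* Let $f\in C^1(\mathbb{R}^n,\mathbb{R}^n)$, $g\in C(\mathbb{R}\times\mathbb{R}^n\times[0,1],\mathbb{R}^n)$, and let $x_0$ be a nondegenerate $T$-periodic limit cycle of $\dot x=f(x)$ whose least period is $T>0$. Let $\{x_\varepsilon\}_{\varepsilon\in(0,1]}$ be $T$-periodic solutions of $\dot x=f(x)+\varepsilon g(t,x,\varepsilon)$ with $\|x_\varepsilon(t)-x_0(t)\|\to0$ as $\varepsilon\to0$ uniformly in $t\in[0,T]$. Suppose there is an eigenfunction $z$ of $\dot z=-(f'(x_0(t)))^*z$ which is not $T$-periodic, with multiplier $\rho$, such that $M^\perp_z(0):=\frac{\rho}{\rho-1}\int_{-T}^0\langle z(s),g(s,x_0(s),0)\rangle ds\neq0$. Then for all sufficiently small $\varepsilon>0$, $x_\varepsilon(t)\neq x_0(0)$ for every $t\in[0,T]$.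
   Context: Nondegenerate: the characteristic multiplier $+1$ of $\dot y=f'(x_0(t))y$ (eigenvalue $1$ of $Y(T)$, $Y(0)=I$) has algebraic multiplicity $1$. An eigenfunction of a linear $T$-periodic system is a nonzero solution $z$ with $z(t+T)=\rho z(t)$ for all $t$ and some $\rho\in\mathbb{R}$ (its characteristic multiplier). *)

theory Defs
  imports "HOL-Analysis.Analysis" "HOL-Computational_Algebra.Polynomial"
begin

definition charpoly_mat :: "real^'n^'n \<Rightarrow> real poly" where
  "charpoly_mat A = det (\<chi> i j. (if i = j then [:0, 1:] else 0) - [:A $ i $ j:])"

definition alg_mult :: "real^'n^'n \<Rightarrow> real \<Rightarrow> nat" where
  "alg_mult A lam = order lam (charpoly_mat A)"

definition periodic_orbit_least :: "(real^'n \<Rightarrow> real^'n) \<Rightarrow> (real \<Rightarrow> real^'n) \<Rightarrow> real \<Rightarrow> bool" where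
  "periodic_orbit_least f x0 T \<longleftrightarrow> T > 0 \<and>
     (\<forall>t. (x0 has_vector_derivative f (x0 t)) (at t)) \<and>
     (\<forall>t. x0 (t + T) = x0 t) \<and>
     (\<forall>s. 0 < s \<and> s < T \<longrightarrow> (\<exists>t. x0 (t + s) \<noteq> x0 t))"

definition nondegenerate_cycle :: "(real^'n \<Rightarrow> real^'n^'n) \<Rightarrow> (real \<Rightarrow> real^'n) \<Rightarrow> real \<Rightarrow> bool" where
  "nondegenerate_cycle Df x0 T \<longleftrightarrow>
     (\<exists>Y :: real \<Rightarrow> real^'n^'n. Y 0 = mat 1 \<and>
        (\<forall>t. (Y has_vector_derivative (Df (x0 t) ** Y t)) (at t)) \<and>
        alg_mult (Y T) 1 = 1)"

definition eigenfunction :: "(real \<Rightarrow> real^'n^'n) \<Rightarrow> real \<Rightarrow> (real \<Rightarrow> real^'n) \<Rightarrow> real \<Rightarrow> bool" where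
  "eigenfunction A T z rho \<longleftrightarrow>
     (\<forall>t. (z has_vector_derivative (A t *v z t)) (at t)) \<and>
     (\<exists>t. z t \<noteq> 0) \<and>
     (\<forall>t. z (t + T) = rho *\<^sub>R z t)"

end

theory Submission
  imports Defs "HOL-Library.Periodic_Fun"
begin

text \<open>
  Suppose the perturbed solution passes through x0(0). Since the cycle does not come back to
  x0(0) before time T, this happens at a time tau close to 0 modulo T, and by periodicity the
  difference w = x(. + tau) - x0 vanishes at both ends of [-T, 0]; Gronwall's inequality makes it
  O(e) there. Pairing w with the adjoint solution z, the boundary terms drop out, and what is left
  equates a linearisation remainder of size o(e) with e times the Melnikov integral taken along
  the shifted perturbed orbit. So that integral tends to 0, whereas by continuity it tends to the
  Melnikov integral along x0, which is nonzero.
\<close>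

lemma periodic_value_in_period:
  fixes p :: "real \<Rightarrow> 'a"
  assumes per: "\<And>t. p (t + T) = p t" and T: "T > 0"
  obtains s where "s \<in> {0..<T}" "p t = p s"
proof
  define k where "k = \<lfloor>t / T\<rfloor>"
  have "of_int k \<le> t / T" "t / T < of_int k + 1"
    unfolding k_def by linarith+
  then show "t - of_int k * T \<in> {0..<T}"
    using T by (simp add: field_simps)
  interpret periodic_fun_simple p T
    by standard (rule per)
  show "p t = p (t - of_int k * T)"
    using plus_of_int[of "t - of_int k * T" k] by simp
qed

lemma gronwall_inequality:
  fixes \<phi> :: "real \<Rightarrow> real"
  assumes cont: "continuous_on {a..b} \<phi>" and L: "L \<ge> 0"
    and le: "\<And>t. t \<in> {a..b} \<Longrightarrow> \<phi> t \<le> c + L * integral {a..t} \<phi>"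
    and t: "t \<in> {a..b}"
  shows "\<phi> t \<le> c * exp (L * (t - a))"
proof -
  define U where "U u = integral {a..u} \<phi>" for u
  define V where "V u = exp (- L * (u - a)) * (c + L * U u)" for u
  have dV: "(V has_real_derivative exp (- L * (u - a)) * (L * \<phi> u - L * (c + L * U u))) (at u within {a..b})"
    if "u \<in> {a..b}" for u
  proof -
    have "(U has_real_derivative \<phi> u) (at u within {a..b})"
      using integral_has_vector_derivative[OF cont that]
      unfolding U_def has_real_derivative_iff_has_vector_derivative .
    then show ?thesis
      unfolding V_def by (auto intro!: derivative_eq_intros simp: algebra_simps)
  qed
  have "V t \<le> V a"
  proof (rule DERIV_nonpos_imp_decreasing_open[of a t V])
    show "a \<le> t" using t by simp
    show "continuous_on {a..t} V"
      using dV t unfolding continuous_on_eq_continuous_within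
      by (meson DERIV_continuous atLeastAtMost_iff continuous_within_subset order_trans subsetI)
    fix u assume u: "a < u" "u < t"
    then have "at u within {a..b} = at u"
      using t by (intro at_within_interior) auto
    moreover have "L * \<phi> u \<le> L * (c + L * U u)"
      using le[of u] u t L unfolding U_def by (simp add: mult_left_mono)
    ultimately show "\<exists>y. (V has_real_derivative y) (at u) \<and> y \<le> 0"
      using dV[of u] u t by (auto intro!: mult_nonneg_nonpos)
  qed
  then have "exp (- L * (t - a)) * (c + L * U t) \<le> c"
    unfolding V_def U_def by simp
  then have "c + L * U t \<le> c * exp (L * (t - a))"
    by (simp add: exp_minus inverse_eq_divide pos_divide_le_eq mult.commute)
  then show ?thesis
    using le[OF t] unfolding U_def by simp
qed

lemma gronwall_norm_bound:
  fixes w w' :: "real \<Rightarrow> 'v::banach"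
  assumes ab: "a \<le> b"
    and d: "\<And>s. s \<in> {a..b} \<Longrightarrow> (w has_vector_derivative w' s) (at s within {a..b})"
    and bnd: "\<And>s. s \<in> {a..b} \<Longrightarrow> norm (w' s) \<le> L * norm (w s) + \<beta>"
    and w0: "w a = 0" and L: "L \<ge> 0" and \<beta>: "\<beta> \<ge> 0"
    and t: "t \<in> {a..b}"
  shows "norm (w t) \<le> \<beta> * (b - a) * exp (L * (b - a))"
proof -
  have cont: "continuous_on {a..b} w"
    using d unfolding continuous_on_eq_continuous_within by (meson has_vector_derivative_continuous)
  have key: "norm (w s) \<le> \<beta> * (b - a) + L * integral {a..s} (\<lambda>s. norm (w s))" if s: "s \<in> {a..b}" for s
  proof -
    have sub: "{a..s} \<subseteq> {a..b}" using s by auto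
    have cont_s: "continuous_on {a..s} w"
      using cont sub by (rule continuous_on_subset)
    have "(w' has_integral (w s - w a)) {a..s}"
      using s by (intro fundamental_theorem_of_calculus)
        (auto intro: has_vector_derivative_within_subset[OF d sub])
    then have I: "(w' has_integral w s) {a..s}"
      using w0 by simp
    have "norm (w s) = norm (integral {a..s} w')"
      using I by (simp add: integral_unique)
    also have "\<dots> \<le> integral {a..s} (\<lambda>r. L * norm (w r) + \<beta>)"
      using bnd sub I
      by (intro integral_norm_bound_integral)
        (auto simp: has_integral_integrable intro!: integrable_continuous_real continuous_intros cont_s)
    also have "\<dots> = L * integral {a..s} (\<lambda>s. norm (w s)) + \<beta> * (s - a)"
      using s by (subst integral_add) (auto intro!: integrable_continuous_real continuous_intros cont_s)
    also have "\<dots> \<le> \<beta> * (b - a) + L * integral {a..s} (\<lambda>s. norm (w s))"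
      using s \<beta> by (simp add: mult_left_mono)
    finally show ?thesis .
  qed
  have "norm (w t) \<le> \<beta> * (b - a) * exp (L * (t - a))"
    by (rule gronwall_inequality[OF _ L key t]) (auto intro!: continuous_intros cont)
  also have "\<dots> \<le> \<beta> * (b - a) * exp (L * (b - a))"
    using t L \<beta> ab by (intro mult_left_mono) (auto intro: mult_left_mono)
  finally show ?thesis .
qed

lemma perturbed_solution_deviation:
  fixes u v h :: "real \<Rightarrow> 'v::banach"
  assumes ab: "a \<le> b"
    and du: "\<And>s. s \<in> {a..b} \<Longrightarrow> (u has_vector_derivative f (u s) + h s) (at s within {a..b})"
    and dv: "\<And>s. s \<in> {a..b} \<Longrightarrow> (v has_vector_derivative f (v s)) (at s within {a..b})"
    and h: "\<And>s. s \<in> {a..b} \<Longrightarrow> norm (h s) \<le> \<beta>"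
    and uS: "\<And>s. s \<in> {a..b} \<Longrightarrow> u s \<in> S" and vS: "\<And>s. s \<in> {a..b} \<Longrightarrow> v s \<in> S"
    and lip: "\<And>y y'. y \<in> S \<Longrightarrow> y' \<in> S \<Longrightarrow> norm (f y - f y') \<le> L * norm (y - y')"
    and L: "L \<ge> 0" and init: "u a = v a" and t: "t \<in> {a..b}"
  shows "norm (u t - v t) \<le> \<beta> * (b - a) * exp (L * (b - a))"
proof -
  have "0 \<le> \<beta>"
    using h[of a] ab by (meson atLeastAtMost_iff norm_ge_zero order_trans order_refl)
  moreover have "norm (f (u s) + h s - f (v s)) \<le> L * norm (u s - v s) + \<beta>" if s: "s \<in> {a..b}" for s
  proof -
    have "norm (f (u s) + h s - f (v s)) \<le> norm (f (u s) - f (v s)) + norm (h s)"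
      by (metis add_diff_eq diff_add_eq norm_triangle_ineq add.commute)
    also have "\<dots> \<le> L * norm (u s - v s) + \<beta>"
      using lip[OF uS vS, OF s s] h[OF s] by linarith
    finally show ?thesis .
  qed
  ultimately show ?thesis
    using gronwall_norm_bound[OF ab has_vector_derivative_diff[OF du dv], of L \<beta> t] init L t by simp
qed

lemma has_vector_derivative_translate:
  fixes f :: "real \<Rightarrow> 'v::real_normed_vector"
  assumes "(f has_vector_derivative f') (at (s + c))"
  shows "((\<lambda>s. f (s + c)) has_vector_derivative f') (at s)"
proof -
  have "((\<lambda>s. s + c) has_vector_derivative 1) (at s)"
    by (auto intro!: derivative_eq_intros)
  then show ?thesis
    using vector_diff_chain_at[of "\<lambda>s. s + c" 1 s f f'] assms by (simp add: o_def)
qed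

lemma adjoint_pairing_has_integral:
  fixes A :: "real \<Rightarrow> real^'n^'n" and z w h :: "real \<Rightarrow> real^'n"
  assumes ab: "a \<le> b"
    and dz: "\<And>s. s \<in> {a..b} \<Longrightarrow> (z has_vector_derivative - transpose (A s) *v z s) (at s within {a..b})"
    and dw: "\<And>s. s \<in> {a..b} \<Longrightarrow> (w has_vector_derivative A s *v w s + h s) (at s within {a..b})"
  shows "((\<lambda>s. z s \<bullet> h s) has_integral z b \<bullet> w b - z a \<bullet> w a) {a..b}"
proof -
  have "((\<lambda>s. z s \<bullet> w s) has_vector_derivative z s \<bullet> h s) (at s within {a..b})"
    if s: "s \<in> {a..b}" for s
  proof -
    have "z s \<bullet> (A s *v w s) = (transpose (A s) *v z s) \<bullet> w s"
      by (simp add: dot_lmul_matrix)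
    moreover have "- transpose (A s) *v z s = - (transpose (A s) *v z s)"
      by (simp add: vec_eq_iff matrix_vector_mult_def sum_negf)
    ultimately have "(\<lambda>d. z s \<bullet> (d *\<^sub>R (A s *v w s + h s)) + (d *\<^sub>R (- transpose (A s) *v z s)) \<bullet> w s)
        = (\<lambda>d. d *\<^sub>R (z s \<bullet> h s))"
      by (simp add: fun_eq_iff inner_add_right algebra_simps)
    then show ?thesis
      using has_derivative_inner[OF dz[OF s, unfolded has_vector_derivative_def]
          dw[OF s, unfolded has_vector_derivative_def]]
      by (simp add: has_vector_derivative_def)
  qed
  then show ?thesis
    using fundamental_theorem_of_calculus[OF ab, of "\<lambda>s. z s \<bullet> w s"] by simp
qed

lemma onorm_matrix_vector_le:
  fixes A :: "real^'n^'m"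
  shows "onorm ((*v) A) \<le> real CARD('m) * real CARD('n) * norm A"
  by (rule onorm_le_matrix_component) (rule order_trans[OF component_le_norm_cart Finite_Cartesian_Product.norm_nth_le])

lemma C1_lipschitz_on_convex:
  fixes f :: "real^'n \<Rightarrow> real^'m" and Df :: "real^'n \<Rightarrow> real^'n^'m"
  assumes deriv: "\<And>y. y \<in> S \<Longrightarrow> (f has_derivative (\<lambda>h. Df y *v h)) (at y within S)"
    and cont: "continuous_on S Df" and "compact S" "convex S"
  obtains L where "L \<ge> 0" "\<And>a b. a \<in> S \<Longrightarrow> b \<in> S \<Longrightarrow> norm (f a - f b) \<le> L * norm (a - b)"
proof -
  obtain B where B: "\<And>y. y \<in> S \<Longrightarrow> norm (Df y) \<le> B" "B > 0"
    using compact_imp_bounded[OF compact_continuous_image[OF cont \<open>compact S\<close>]]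
    by (auto simp: bounded_pos)
  define K where "K = real CARD('m) * real CARD('n)"
  have "onorm (\<lambda>h. Df y *v h) \<le> K * B" if "y \<in> S" for y
  proof -
    have "onorm (\<lambda>h. Df y *v h) \<le> K * norm (Df y)"
      unfolding K_def by (rule onorm_matrix_vector_le)
    also have "\<dots> \<le> K * B"
      using B(1)[OF that] by (rule mult_left_mono) (simp add: K_def)
    finally show ?thesis .
  qed
  moreover have "K * B \<ge> 0"
    using B(2) unfolding K_def by simp
  ultimately show ?thesis
    using that differentiable_bound[OF \<open>convex S\<close> deriv] by blast
qed

lemma C1_uniform_linearization:
  fixes f :: "real^'n \<Rightarrow> real^'m" and Df :: "real^'n \<Rightarrow> real^'n^'m"
  assumes deriv: "\<And>y. y \<in> S \<Longrightarrow> (f has_derivative (\<lambda>h. Df y *v h)) (at y within S)"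
    and cont: "continuous_on S Df" and "compact S" "convex S" and \<eta>: "\<eta> > 0"
  obtains \<rho> where "\<rho> > 0" "\<And>a b. a \<in> S \<Longrightarrow> b \<in> S \<Longrightarrow> norm (a - b) < \<rho> \<Longrightarrow>
      norm (f a - f b - Df b *v (a - b)) \<le> \<eta> * norm (a - b)"
proof -
  define K where "K = real CARD('m) * real CARD('n)"
  have K: "K > 0" unfolding K_def by simp
  obtain \<rho> where \<rho>: "\<rho> > 0" "\<And>a b. a \<in> S \<Longrightarrow> b \<in> S \<Longrightarrow> dist a b < \<rho> \<Longrightarrow> dist (Df a) (Df b) < \<eta> / K"
    using compact_uniformly_continuous[OF cont \<open>compact S\<close>] \<eta> K
    unfolding uniformly_continuous_on_def by (metis divide_pos_pos)
  have "norm (f a - f b - Df b *v (a - b)) \<le> \<eta> * norm (a - b)"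
    if a: "a \<in> S" and b: "b \<in> S" and ab: "norm (a - b) < \<rho>" for a b
  proof -
    define S' where "S' = S \<inter> ball b \<rho>"
    have seg: "b + t *\<^sub>R (a - b) \<in> S'" if t: "t \<in> {0..1}" for t
    proof -
      have "b + t *\<^sub>R (a - b) = (1 - t) *\<^sub>R b + t *\<^sub>R a"
        by (simp add: algebra_simps)
      moreover have "(1 - t) *\<^sub>R b + t *\<^sub>R a \<in> S"
        using convexD[OF \<open>convex S\<close> b a] t by auto
      moreover have "dist b (b + t *\<^sub>R (a - b)) < \<rho>"
        using t ab by (simp add: dist_norm) (auto intro: le_less_trans[OF mult_left_le_one_le])
      ultimately show ?thesis
        unfolding S'_def by simp
    qed
    have "onorm ((\<lambda>h. Df y *v h) - (\<lambda>h. Df b *v h)) \<le> \<eta>" if y: "y \<in> S'" for y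
    proof -
      have "(\<lambda>h. Df y *v h) - (\<lambda>h. Df b *v h) = (*v) (Df y - Df b)"
        by (simp add: fun_eq_iff matrix_vector_mult_diff_rdistrib)
      then have "onorm ((\<lambda>h. Df y *v h) - (\<lambda>h. Df b *v h)) \<le> K * norm (Df y - Df b)"
        unfolding K_def by (simp add: onorm_matrix_vector_le)
      also have "\<dots> \<le> K * (\<eta> / K)"
        using \<rho>(2)[of y b] y b K unfolding S'_def
        by (auto simp: dist_norm norm_minus_commute field_simps)
      finally show ?thesis
        using K by simp
    qed
    moreover have "b \<in> S'"
      using b \<rho>(1) unfolding S'_def by simp
    ultimately show ?thesis
      using differentiable_bound_linearization[of b a S' f "\<lambda>y h. Df y *v h" b \<eta>] seg
        has_derivative_subset[OF deriv] unfolding S'_def by (auto simp: mult.commute)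
  qed
  then show ?thesis
    using that \<rho>(1) by blast
qed

lemma dist_triple_le:
  fixes a a' :: "'a::metric_space" and b b' :: "'b::metric_space" and c c' :: "'c::metric_space"
  shows "dist (a, b, c) (a', b', c') \<le> dist a a' + dist b b' + dist c c'"
proof -
  have "dist (b, c) (b', c') \<le> dist b b' + dist c c'"
    unfolding dist_Pair_Pair by (rule sqrt_sum_squares_le_sum) auto
  moreover have "dist (a, b, c) (a', b', c') \<le> dist a a' + dist (b, c) (b', c')"
    unfolding dist_Pair_Pair[of a "(b, c)"] by (rule sqrt_sum_squares_le_sum) auto
  ultimately show ?thesis
    by simp
qed

lemma has_integral_norm_bound_interval:
  fixes f :: "real \<Rightarrow> 'b::real_normed_vector"
  assumes "(f has_integral i) {a..b}" "a \<le> b" "\<And>x. x \<in> {a..b} \<Longrightarrow> norm (f x) \<le> B"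
  shows "norm i \<le> B * (b - a)"
proof -
  have "0 \<le> B"
    using assms(2) by (meson assms(3) atLeastAtMost_iff norm_ge_zero order_trans order_refl)
  then have "norm i \<le> B * Henstock_Kurzweil_Integration.content {a..b}"
    by (rule has_integral_bound_real[OF _ finite.emptyI assms(1)]) (simp add: assms(3))
  then show ?thesis
    using assms(2) by simp
qed

lemma abs_inner_le_mult:
  fixes x y :: "'a::real_inner"
  assumes "norm x \<le> A" "norm y \<le> B"
  shows "\<bar>x \<bullet> y\<bar> \<le> A * B"
  using assms by (meson Cauchy_Schwarz_ineq2 mult_mono norm_ge_zero order_trans)

locale perturbed_limit_cycle =
  fixes f :: "real^'n \<Rightarrow> real^'n" and Df :: "real^'n \<Rightarrow> real^'n^'n"
    and g :: "real \<Rightarrow> real^'n \<Rightarrow> real \<Rightarrow> real^'n"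
    and x0 :: "real \<Rightarrow> real^'n" and x :: "real \<Rightarrow> real \<Rightarrow> real^'n"
    and z :: "real \<Rightarrow> real^'n" and T :: real
  assumes f_deriv: "\<And>y. (f has_derivative (\<lambda>h. Df y *v h)) (at y)"
    and Df_cont: "continuous_on UNIV Df"
    and g_cont: "continuous_on (UNIV \<times> UNIV \<times> {0..1}) (\<lambda>(t, y, e). g t y e)"
    and cycle: "periodic_orbit_least f x0 T"
    and x_sol: "\<And>e t. e \<in> {0<..1} \<Longrightarrow>
                  (x e has_vector_derivative f (x e t) + e *\<^sub>R g t (x e t) e) (at t)"
    and x_per: "\<And>e t. e \<in> {0<..1} \<Longrightarrow> x e (t + T) = x e t"
    and x_conv: "\<And>\<epsilon>. \<epsilon> > 0 \<Longrightarrow> \<exists>\<delta>>0. \<forall>e\<in>{0<..1}. e < \<delta> \<longrightarrow>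
                  (\<forall>t\<in>{0..T}. norm (x e t - x0 t) < \<epsilon>)"
    and z_adjoint: "\<And>t. (z has_vector_derivative - transpose (Df (x0 t)) *v z t) (at t)"
begin

lemma T_pos: "T > 0"
  and x0_deriv: "(x0 has_vector_derivative f (x0 t)) (at t)"
  and x0_periodic: "x0 (t + T) = x0 t"
  and x0_least: "0 < s \<Longrightarrow> s < T \<Longrightarrow> \<exists>t. x0 (t + s) \<noteq> x0 t"
  using cycle unfolding periodic_orbit_least_def by auto

lemma x0_continuous: "continuous_on A x0"
  using x0_deriv by (meson continuous_at_imp_continuous_on has_vector_derivative_continuous)

lemma x_shift_continuous: "e \<in> {0<..1} \<Longrightarrow> continuous_on A (\<lambda>s. x e (s + \<tau>))"
  using has_vector_derivative_translate[OF x_sol]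
  by (meson continuous_at_imp_continuous_on has_vector_derivative_continuous)

lemma z_continuous: "continuous_on A z"
  using z_adjoint by (meson continuous_at_imp_continuous_on has_vector_derivative_continuous)

lemma z_bounded:
  obtains Z where "Z > 0" "\<And>s. s \<in> {-T..0} \<Longrightarrow> norm (z s) \<le> Z"
proof -
  have "bounded (z ` {-T..0})"
    by (rule compact_imp_bounded[OF compact_continuous_image[OF z_continuous compact_Icc]])
  then show ?thesis
    using that unfolding bounded_pos by blast
qed

lemma integrable_along:
  assumes "continuous_on {-T..0} p" "e \<in> {0..1}"
  shows "(\<lambda>s. z s \<bullet> g (s + \<tau>) (p s) e) integrable_on {-T..0}"
proof -
  have "continuous_on {-T..0} ((\<lambda>(t, y, e). g t y e) \<circ> (\<lambda>s. (s + \<tau>, p s, e)))"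
    using assms by (intro continuous_on_compose continuous_intros continuous_on_subset[OF g_cont]) auto
  then show ?thesis
    unfolding o_def by (intro integrable_continuous_real continuous_intros z_continuous) simp
qed

lemma orbit_neighbourhood:
  obtains S L where "compact S" "convex S" "\<And>t y. norm (y - x0 t) \<le> 1 \<Longrightarrow> y \<in> S"
    and "L \<ge> 0" "\<And>a b. a \<in> S \<Longrightarrow> b \<in> S \<Longrightarrow> norm (f a - f b) \<le> L * norm (a - b)"
proof -
  have "bounded (x0 ` {0..T})"
    by (rule compact_imp_bounded[OF compact_continuous_image[OF x0_continuous compact_Icc]])
  then obtain B where B: "\<And>s. s \<in> {0..T} \<Longrightarrow> norm (x0 s) \<le> B"
    unfolding bounded_iff by blast
  have x0_bound: "norm (x0 t) \<le> B" for t
  proof -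
    obtain s where "s \<in> {0..<T}" "x0 t = x0 s"
      using periodic_value_in_period[of x0 T, OF x0_periodic T_pos] .
    then show ?thesis
      using B[of s] by simp
  qed
  have near: "y \<in> cball 0 (B + 1)" if "norm (y - x0 t) \<le> 1" for t y
    using that norm_triangle_sub[of y "x0 t"] x0_bound[of t] by simp
  obtain L where "L \<ge> 0" "\<And>a b. a \<in> cball 0 (B + 1) \<Longrightarrow> b \<in> cball 0 (B + 1) \<Longrightarrow>
      norm (f a - f b) \<le> L * norm (a - b)"
    using C1_lipschitz_on_convex[of "cball 0 (B + 1)" f Df, OF has_derivative_at_withinI[OF f_deriv]
        continuous_on_subset[OF Df_cont subset_UNIV] compact_cball convex_cball] by blast
  with near show ?thesis
    using that[of "cball 0 (B + 1)"] by simp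
qed

lemma x0_no_early_return:
  assumes "0 < \<tau>" "\<tau> < T"
  shows "x0 \<tau> \<noteq> x0 0"
proof
  assume return: "x0 \<tau> = x0 0"
  obtain S L where S: "\<And>t y. norm (y - x0 t) \<le> 1 \<Longrightarrow> y \<in> S"
    and L: "L \<ge> 0" and lip: "\<And>a b. a \<in> S \<Longrightarrow> b \<in> S \<Longrightarrow> norm (f a - f b) \<le> L * norm (a - b)"
    using orbit_neighbourhood by metis
  have x0S: "x0 t \<in> S" for t
    using S[of "x0 t" t] by simp
  have shifted: "((\<lambda>s. x0 (s + \<tau>)) has_vector_derivative f (x0 (s + \<tau>)) + 0) (at s within A)" for s A
    using has_vector_derivative_at_within[OF has_vector_derivative_translate[OF x0_deriv]] by simp
  have "norm (x0 (s + \<tau>) - x0 s) \<le> 0 * (T - 0) * exp (L * (T - 0))" if "s \<in> {0..T}" for s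
    using T_pos return
    by (intro perturbed_solution_deviation[OF _ shifted has_vector_derivative_at_within[OF x0_deriv]
        _ x0S x0S lip L _ that]) simp_all
  then have on_period: "x0 (s + \<tau>) - x0 s = 0" if "s \<in> {0..<T}" for s
    using that by auto
  have "x0 (t + \<tau>) - x0 t = 0" for t
  proof -
    have "x0 (t + T + \<tau>) - x0 (t + T) = x0 (t + \<tau>) - x0 t" for t
      using x0_periodic[of "t + \<tau>"] x0_periodic[of t] by (simp add: algebra_simps)
    then obtain s where "s \<in> {0..<T}" "x0 (t + \<tau>) - x0 t = x0 (s + \<tau>) - x0 s"
      using periodic_value_in_period[of "\<lambda>t. x0 (t + \<tau>) - x0 t" T, OF _ T_pos]
      by blast
    then show ?thesis
      using on_period by simp
  qed
  then show False
    using x0_least[OF assms] by simp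
qed

lemma x0_away_from_start:
  assumes "0 < \<gamma>" "2 * \<gamma> < T"
  obtains \<epsilon> where "\<epsilon> > 0" "\<And>t. t \<in> {\<gamma>..T - \<gamma>} \<Longrightarrow> \<epsilon> \<le> norm (x0 t - x0 0)"
proof -
  have "{\<gamma>..T - \<gamma>} \<noteq> {}"
    using assms by simp
  moreover have "continuous_on {\<gamma>..T - \<gamma>} (\<lambda>t. norm (x0 t - x0 0))"
    by (intro continuous_intros x0_continuous)
  ultimately obtain t0 where t0: "t0 \<in> {\<gamma>..T - \<gamma>}"
    "\<And>t. t \<in> {\<gamma>..T - \<gamma>} \<Longrightarrow> norm (x0 t0 - x0 0) \<le> norm (x0 t - x0 0)"
    using continuous_attains_inf[OF compact_Icc] by blast
  moreover have "x0 t0 \<noteq> x0 0"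
    using x0_no_early_return t0(1) assms by auto
  ultimately show ?thesis
    using that[of "norm (x0 t0 - x0 0)"] by simp
qed

lemma x_uniform_convergence:
  assumes "\<epsilon> > 0"
  obtains \<delta> where "\<delta> > 0" "\<And>e t. e \<in> {0<..1} \<Longrightarrow> e < \<delta> \<Longrightarrow> norm (x e t - x0 t) < \<epsilon>"
proof -
  obtain \<delta> where \<delta>: "\<delta> > 0" "\<And>e t. e \<in> {0<..1} \<Longrightarrow> e < \<delta> \<Longrightarrow> t \<in> {0..T} \<Longrightarrow> norm (x e t - x0 t) < \<epsilon>"
    using x_conv[OF assms] by blast
  have "norm (x e t - x0 t) < \<epsilon>" if e: "e \<in> {0<..1}" "e < \<delta>" for e t
  proof -
    obtain s where "s \<in> {0..<T}" "x e t - x0 t = x e s - x0 s"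
      using periodic_value_in_period[of "\<lambda>t. x e t - x0 t" T, OF _ T_pos] x_per[OF e(1)] x0_periodic
      by auto
    then show ?thesis
      using \<delta>(2)[OF e] by simp
  qed
  then show ?thesis
    using that \<delta>(1) by blast
qed

lemma hit_near_start:
  assumes "\<gamma> > 0"
  obtains \<delta> where "\<delta> > 0" "\<And>e t. e \<in> {0<..1} \<Longrightarrow> e < \<delta> \<Longrightarrow> t \<in> {0..T} \<Longrightarrow> x e t = x0 0 \<Longrightarrow>
      \<exists>\<tau>. \<bar>\<tau>\<bar> < \<gamma> \<and> x e \<tau> = x0 0"
proof -
  define \<gamma>' where "\<gamma>' = min \<gamma> (T / 3)"
  have \<gamma>': "0 < \<gamma>'" "2 * \<gamma>' < T" "\<gamma>' \<le> \<gamma>"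
    unfolding \<gamma>'_def using assms T_pos by auto
  obtain \<epsilon> where \<epsilon>: "\<epsilon> > 0" "\<And>t. t \<in> {\<gamma>'..T - \<gamma>'} \<Longrightarrow> \<epsilon> \<le> norm (x0 t - x0 0)"
    using x0_away_from_start[OF \<gamma>'(1,2)] by blast
  obtain \<delta> where \<delta>: "\<delta> > 0" "\<And>e t. e \<in> {0<..1} \<Longrightarrow> e < \<delta> \<Longrightarrow> norm (x e t - x0 t) < \<epsilon>"
    using x_uniform_convergence[OF \<epsilon>(1)] by blast
  have "\<exists>\<tau>. \<bar>\<tau>\<bar> < \<gamma> \<and> x e \<tau> = x0 0"
    if e: "e \<in> {0<..1}" "e < \<delta>" and t: "t \<in> {0..T}" and hit: "x e t = x0 0" for e t
  proof -
    have "t \<notin> {\<gamma>'..T - \<gamma>'}"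
      using \<delta>(2)[OF e, of t] \<epsilon>(2)[of t] hit by (auto simp: norm_minus_commute)
    then consider "t < \<gamma>'" | "T - \<gamma>' < t"
      by fastforce
    then show ?thesis
    proof cases
      case 1
      then show ?thesis
        using t \<gamma>' hit by (intro exI[of _ t]) auto
    next
      case 2
      then show ?thesis
        using t \<gamma>' hit x_per[OF e(1), of "t - T"] by (intro exI[of _ "t - T"]) auto
    qed
  qed
  then show ?thesis
    using that \<delta>(1) by blast
qed

lemma deviation_after_hit:
  obtains C where "C \<ge> 0" "\<And>e \<tau> s. e \<in> {0<..1} \<Longrightarrow> \<bar>\<tau>\<bar> \<le> T \<Longrightarrow> x e \<tau> = x0 0 \<Longrightarrow>
      (\<And>t. norm (x e t - x0 t) \<le> 1) \<Longrightarrow> s \<in> {-T..0} \<Longrightarrow> norm (x e (s + \<tau>) - x0 s) \<le> e * C"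
proof -
  obtain S L where "compact S" "convex S" and S: "\<And>t y. norm (y - x0 t) \<le> 1 \<Longrightarrow> y \<in> S"
    and L: "L \<ge> 0" and lip: "\<And>a b. a \<in> S \<Longrightarrow> b \<in> S \<Longrightarrow> norm (f a - f b) \<le> L * norm (a - b)"
    using orbit_neighbourhood by metis
  define D where "D = {-2*T..2*T} \<times> S \<times> {0..1::real}"
  have "compact ((\<lambda>(t, y, e). g t y e) ` D)"
    unfolding D_def using \<open>compact S\<close>
    by (intro compact_continuous_image continuous_on_subset[OF g_cont] compact_Times compact_Icc) auto
  then obtain G where G: "\<And>t y e. (t, y, e) \<in> D \<Longrightarrow> norm (g t y e) \<le> G" "G > 0"
    by (fastforce dest!: compact_imp_bounded simp: bounded_pos)
  define C where "C = G * T * exp (L * T)"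
  have "norm (x e (s + \<tau>) - x0 s) \<le> e * C"
    if e: "e \<in> {0<..1}" and \<tau>: "\<bar>\<tau>\<bar> \<le> T" and hit: "x e \<tau> = x0 0"
      and close: "\<And>t. norm (x e t - x0 t) \<le> 1" and s: "s \<in> {-T..0}" for e \<tau> s
  proof -
    have "norm (e *\<^sub>R g (r + \<tau>) (x e (r + \<tau>)) e) \<le> e * G" if "r \<in> {-T..0}" for r
    proof -
      have "(r + \<tau>, x e (r + \<tau>), e) \<in> D"
        unfolding D_def using that \<tau> e S[OF close] by auto
      then show ?thesis
        using G(1) e by (simp add: mult_left_mono)
    qed
    moreover have "x e (- T + \<tau>) = x0 (- T)"
      using x_per[OF e, of "- T + \<tau>"] x0_periodic[of "- T"] hit by simp
    ultimately have "norm (x e (s + \<tau>) - x0 s) \<le> e * G * (0 - - T) * exp (L * (0 - - T))"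
      using T_pos S[OF close] S[of "x0 r" r for r]
      by (intro perturbed_solution_deviation[OF _ has_vector_derivative_at_within[OF
            has_vector_derivative_translate[OF x_sol[OF e]]]
          has_vector_derivative_at_within[OF x0_deriv] _ _ _ lip L _ s]) auto
    then show ?thesis
      unfolding C_def by (simp add: mult.assoc)
  qed
  moreover have "C \<ge> 0"
    unfolding C_def using G(2) T_pos by simp
  ultimately show ?thesis
    using that by blast
qed

definition melnikov_integral :: real where
  "melnikov_integral = integral {-T..0} (\<lambda>s. z s \<bullet> g s (x0 s) 0)"

definition melnikov_along :: "real \<Rightarrow> real \<Rightarrow> real" where
  "melnikov_along e \<tau> = integral {-T..0} (\<lambda>s. z s \<bullet> g (s + \<tau>) (x e (s + \<tau>)) e)"

lemma pairing_after_hit: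
  assumes e: "e \<in> {0<..1}" and hit: "x e \<tau> = x0 0"
  shows "((\<lambda>s. z s \<bullet> (f (x e (s + \<tau>)) - f (x0 s) - Df (x0 s) *v (x e (s + \<tau>) - x0 s)))
      has_integral - (e * melnikov_along e \<tau>)) {-T..0}"
proof -
  define u where "u s = x e (s + \<tau>)" for s
  define gg where "gg s = g (s + \<tau>) (u s) e" for s
  define r where "r s = f (u s) - f (x0 s) - Df (x0 s) *v (u s - x0 s)" for s
  have du: "(u has_vector_derivative f (u s) + e *\<^sub>R gg s) (at s)" for s
    unfolding u_def gg_def by (rule has_vector_derivative_translate[OF x_sol[OF e]])
  have split: "f (u s) + e *\<^sub>R gg s - f (x0 s) = Df (x0 s) *v (u s - x0 s) + (r s + e *\<^sub>R gg s)" for s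
    unfolding r_def by (simp add: diff_add_eq add.commute add.left_commute)
  have dw: "((\<lambda>s. u s - x0 s) has_vector_derivative Df (x0 s) *v (u s - x0 s) + (r s + e *\<^sub>R gg s)) (at s)" for s
    using has_vector_derivative_diff[OF du x0_deriv, of s] unfolding split .
  have "((\<lambda>s. z s \<bullet> (r s + e *\<^sub>R gg s)) has_integral
      z 0 \<bullet> (u 0 - x0 0) - z (- T) \<bullet> (u (- T) - x0 (- T))) {-T..0}"
    using T_pos by (intro adjoint_pairing_has_integral[where A = "\<lambda>s. Df (x0 s)"]
        has_vector_derivative_at_within[OF z_adjoint] has_vector_derivative_at_within[OF dw]) simp
  moreover have "u 0 = x0 0" "u (- T) = x0 (- T)"
    unfolding u_def using hit x_per[OF e, of "- T + \<tau>"] x0_periodic[of "- T"] by simp_all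
  ultimately have pairing: "((\<lambda>s. z s \<bullet> (r s + e *\<^sub>R gg s)) has_integral 0) {-T..0}"
    by simp
  have "(\<lambda>s. z s \<bullet> gg s) integrable_on {-T..0}"
    unfolding gg_def u_def using e by (intro integrable_along x_shift_continuous) auto
  then have "((\<lambda>s. e * (z s \<bullet> gg s)) has_integral e * melnikov_along e \<tau>) {-T..0}"
    unfolding melnikov_along_def gg_def u_def by (rule has_integral_mult_right[OF integrable_integral])
  from has_integral_diff[OF pairing this] show ?thesis
    unfolding r_def u_def by (simp add: inner_add_right)
qed

lemma remainder_small_after_hit:
  assumes \<eta>: "\<eta> > 0"
  obtains \<delta> where "\<delta> > 0" "\<And>e \<tau> s. e \<in> {0<..1} \<Longrightarrow> e < \<delta> \<Longrightarrow> \<bar>\<tau>\<bar> \<le> T \<Longrightarrow> x e \<tau> = x0 0 \<Longrightarrow>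
      (\<And>t. norm (x e t - x0 t) \<le> 1) \<Longrightarrow> s \<in> {-T..0} \<Longrightarrow>
      norm (f (x e (s + \<tau>)) - f (x0 s) - Df (x0 s) *v (x e (s + \<tau>) - x0 s)) \<le> \<eta> * e"
proof -
  obtain C where C: "C \<ge> 0" "\<And>e \<tau> s. e \<in> {0<..1} \<Longrightarrow> \<bar>\<tau>\<bar> \<le> T \<Longrightarrow> x e \<tau> = x0 0 \<Longrightarrow>
      (\<And>t. norm (x e t - x0 t) \<le> 1) \<Longrightarrow> s \<in> {-T..0} \<Longrightarrow> norm (x e (s + \<tau>) - x0 s) \<le> e * C"
    using deviation_after_hit by metis
  obtain S where "compact S" "convex S" and S: "\<And>t y. norm (y - x0 t) \<le> 1 \<Longrightarrow> y \<in> S"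
    using orbit_neighbourhood by metis
  have "\<eta> / (C + 1) > 0"
    using \<eta> C(1) by simp
  then obtain \<rho> where \<rho>: "\<rho> > 0" "\<And>a b. a \<in> S \<Longrightarrow> b \<in> S \<Longrightarrow> norm (a - b) < \<rho> \<Longrightarrow>
      norm (f a - f b - Df b *v (a - b)) \<le> \<eta> / (C + 1) * norm (a - b)"
    using C1_uniform_linearization[OF has_derivative_at_withinI[OF f_deriv]
        continuous_on_subset[OF Df_cont subset_UNIV] \<open>compact S\<close> \<open>convex S\<close>] by blast
  have "norm (f (x e (s + \<tau>)) - f (x0 s) - Df (x0 s) *v (x e (s + \<tau>) - x0 s)) \<le> \<eta> * e"
    if e: "e \<in> {0<..1}" "e < \<rho> / (C + 1)" and \<tau>: "\<bar>\<tau>\<bar> \<le> T" and hit: "x e \<tau> = x0 0"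
      and close: "\<And>t. norm (x e t - x0 t) \<le> 1" and s: "s \<in> {-T..0}" for e \<tau> s
  proof -
    have dev: "norm (x e (s + \<tau>) - x0 s) \<le> e * C"
      by (rule C(2)[OF e(1) \<tau> hit close s])
    also have "\<dots> < \<rho>"
      using e C(1) by (simp add: pos_less_divide_eq) (smt (verit) mult_left_mono)
    finally have "norm (f (x e (s + \<tau>)) - f (x0 s) - Df (x0 s) *v (x e (s + \<tau>) - x0 s))
        \<le> \<eta> / (C + 1) * norm (x e (s + \<tau>) - x0 s)"
      using \<rho>(2)[OF S[OF close] S[of "x0 s" s]] by simp
    also have "\<dots> \<le> \<eta> / (C + 1) * (e * C)"
      by (rule mult_left_mono[OF dev]) (use \<eta> C(1) in simp)
    also have "\<dots> \<le> \<eta> * e"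
      using \<eta> C(1) e(1) by (simp add: field_simps)
    finally show ?thesis .
  qed
  moreover have "\<rho> / (C + 1) > 0"
    using \<rho>(1) C(1) by simp
  ultimately show ?thesis
    using that by blast
qed

lemma melnikov_along_small_after_hit:
  assumes \<eta>: "\<eta> > 0"
  obtains \<delta> where "\<delta> > 0" "\<And>e \<tau>. e \<in> {0<..1} \<Longrightarrow> e < \<delta> \<Longrightarrow> \<bar>\<tau>\<bar> \<le> T \<Longrightarrow> x e \<tau> = x0 0 \<Longrightarrow>
      (\<And>t. norm (x e t - x0 t) \<le> 1) \<Longrightarrow> \<bar>melnikov_along e \<tau>\<bar> \<le> \<eta>"
proof -
  obtain Z where Z: "Z > 0" "\<And>s. s \<in> {-T..0} \<Longrightarrow> norm (z s) \<le> Z"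
    using z_bounded by blast
  obtain \<delta> where \<delta>: "\<delta> > 0" "\<And>e \<tau> s. e \<in> {0<..1} \<Longrightarrow> e < \<delta> \<Longrightarrow> \<bar>\<tau>\<bar> \<le> T \<Longrightarrow> x e \<tau> = x0 0 \<Longrightarrow>
      (\<And>t. norm (x e t - x0 t) \<le> 1) \<Longrightarrow> s \<in> {-T..0} \<Longrightarrow>
      norm (f (x e (s + \<tau>)) - f (x0 s) - Df (x0 s) *v (x e (s + \<tau>) - x0 s)) \<le> \<eta> / (T * Z) * e"
    using remainder_small_after_hit[of "\<eta> / (T * Z)"] \<eta> T_pos Z(1) by auto
  have "\<bar>melnikov_along e \<tau>\<bar> \<le> \<eta>"
    if e: "e \<in> {0<..1}" "e < \<delta>" and \<tau>: "\<bar>\<tau>\<bar> \<le> T" and hit: "x e \<tau> = x0 0"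
      and close: "\<And>t. norm (x e t - x0 t) \<le> 1" for e \<tau>
  proof -
    let ?r = "\<lambda>s. f (x e (s + \<tau>)) - f (x0 s) - Df (x0 s) *v (x e (s + \<tau>) - x0 s)"
    have integrand: "norm (z s \<bullet> ?r s) \<le> Z * (\<eta> / (T * Z) * e)" if s: "s \<in> {-T..0}" for s
      using abs_inner_le_mult[OF Z(2)[OF s] \<delta>(2)[OF e \<tau> hit close s]] by simp
    have "norm (- (e * melnikov_along e \<tau>)) \<le> Z * (\<eta> / (T * Z) * e) * (0 - - T)"
      by (rule has_integral_norm_bound_interval[OF pairing_after_hit[OF e(1) hit] _ integrand])
        (use T_pos in simp)
    then have "e * \<bar>melnikov_along e \<tau>\<bar> \<le> e * \<eta>"
      using T_pos Z(1) e(1) by (simp add: abs_mult)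
    then show ?thesis
      using e(1) by simp
  qed
  then show ?thesis
    using that \<delta>(1) by blast
qed

lemma g_along_close:
  assumes \<eta>: "\<eta> > 0"
  obtains \<delta> where "\<delta> > 0" "\<And>e \<tau> s. e \<in> {0<..1} \<Longrightarrow> e < \<delta> \<Longrightarrow> \<bar>\<tau>\<bar> < \<delta> \<Longrightarrow> s \<in> {-T..0} \<Longrightarrow>
      norm (g (s + \<tau>) (x e (s + \<tau>)) e - g s (x0 s) 0) \<le> \<eta>"
proof -
  obtain S where "compact S" "convex S" and S: "\<And>t y. norm (y - x0 t) \<le> 1 \<Longrightarrow> y \<in> S"
    using orbit_neighbourhood by metis
  define D where "D = {-2*T..2*T} \<times> S \<times> {0..1::real}"
  have "uniformly_continuous_on D (\<lambda>(t, y, e). g t y e)"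
    unfolding D_def using \<open>compact S\<close>
    by (intro compact_uniformly_continuous continuous_on_subset[OF g_cont] compact_Times compact_Icc) auto
  then obtain \<delta>g where \<delta>g: "\<delta>g > 0" "\<And>t y e t' y' e'. (t, y, e) \<in> D \<Longrightarrow> (t', y', e') \<in> D \<Longrightarrow>
      dist (t, y, e) (t', y', e') < \<delta>g \<Longrightarrow> dist (g t y e) (g t' y' e') < \<eta>"
    using \<eta> unfolding uniformly_continuous_on_def by (metis (no_types, lifting) case_prod_conv)
  have "uniformly_continuous_on {-2*T..2*T} x0"
    by (intro compact_uniformly_continuous x0_continuous compact_Icc)
  then obtain \<delta>x where \<delta>x: "\<delta>x > 0" "\<And>a b. a \<in> {-2*T..2*T} \<Longrightarrow> b \<in> {-2*T..2*T} \<Longrightarrow>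
      dist a b < \<delta>x \<Longrightarrow> dist (x0 a) (x0 b) < \<delta>g / 4"
    using \<delta>g(1) unfolding uniformly_continuous_on_def by (metis zero_less_divide_iff zero_less_numeral)
  obtain \<delta>1 where \<delta>1: "\<delta>1 > 0" "\<And>e t. e \<in> {0<..1} \<Longrightarrow> e < \<delta>1 \<Longrightarrow> norm (x e t - x0 t) < min 1 (\<delta>g / 4)"
    using x_uniform_convergence[of "min 1 (\<delta>g / 4)"] \<delta>g(1) by auto
  define \<delta> where "\<delta> = min (min \<delta>1 \<delta>x) (min T (\<delta>g / 4))"
  have "norm (g (s + \<tau>) (x e (s + \<tau>)) e - g s (x0 s) 0) \<le> \<eta>"
    if e: "e \<in> {0<..1}" "e < \<delta>" and \<tau>: "\<bar>\<tau>\<bar> < \<delta>" and s: "s \<in> {-T..0}" for e \<tau> s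
  proof -
    have close: "norm (x e (s + \<tau>) - x0 (s + \<tau>)) < min 1 (\<delta>g / 4)"
      using \<delta>1(2)[OF e(1)] e(2) unfolding \<delta>_def by simp
    have "s + \<tau> \<in> {-2*T..2*T}" "s \<in> {-2*T..2*T}"
      using s \<tau> T_pos unfolding \<delta>_def by auto
    then have "dist (x0 (s + \<tau>)) (x0 s) < \<delta>g / 4"
      using \<delta>x(2)[of "s + \<tau>" s] \<tau> unfolding \<delta>_def by (simp add: dist_real_def)
    then have "dist (x e (s + \<tau>)) (x0 s) < \<delta>g / 2"
      using close dist_triangle[of "x e (s + \<tau>)" "x0 s" "x0 (s + \<tau>)"] by (simp add: dist_norm)
    then have "dist (s + \<tau>, x e (s + \<tau>), e) (s, x0 s, 0) < \<delta>g"
      using dist_triple_le[of "s + \<tau>" "x e (s + \<tau>)" e s "x0 s" 0] \<tau> e unfolding \<delta>_def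
      by (simp add: dist_real_def)
    moreover have "(s + \<tau>, x e (s + \<tau>), e) \<in> D" "(s, x0 s, 0) \<in> D"
      unfolding D_def using s \<tau> e close S[of _ "s + \<tau>"] S[of "x0 s" s] T_pos unfolding \<delta>_def by auto
    ultimately show ?thesis
      using \<delta>g(2) by (fastforce simp: dist_norm)
  qed
  moreover have "\<delta> > 0"
    unfolding \<delta>_def using \<delta>1(1) \<delta>x(1) \<delta>g(1) T_pos by simp
  ultimately show ?thesis
    using that by blast
qed

lemma melnikov_along_tendsto:
  assumes \<eta>: "\<eta> > 0"
  obtains \<delta> where "\<delta> > 0" "\<And>e \<tau>. e \<in> {0<..1} \<Longrightarrow> e < \<delta> \<Longrightarrow> \<bar>\<tau>\<bar> < \<delta> \<Longrightarrow>
      \<bar>melnikov_along e \<tau> - melnikov_integral\<bar> \<le> \<eta>"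
proof -
  obtain Z where Z: "Z > 0" "\<And>s. s \<in> {-T..0} \<Longrightarrow> norm (z s) \<le> Z"
    using z_bounded by blast
  obtain \<delta> where \<delta>: "\<delta> > 0" "\<And>e \<tau> s. e \<in> {0<..1} \<Longrightarrow> e < \<delta> \<Longrightarrow> \<bar>\<tau>\<bar> < \<delta> \<Longrightarrow> s \<in> {-T..0} \<Longrightarrow>
      norm (g (s + \<tau>) (x e (s + \<tau>)) e - g s (x0 s) 0) \<le> \<eta> / (T * Z)"
    using g_along_close[of "\<eta> / (T * Z)"] \<eta> T_pos Z(1) by auto
  have "\<bar>melnikov_along e \<tau> - melnikov_integral\<bar> \<le> \<eta>"
    if e: "e \<in> {0<..1}" "e < \<delta>" and \<tau>: "\<bar>\<tau>\<bar> < \<delta>" for e \<tau>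
  proof -
    have integrand: "norm (z s \<bullet> g (s + \<tau>) (x e (s + \<tau>)) e - z s \<bullet> g s (x0 s) 0) \<le> Z * (\<eta> / (T * Z))"
      if s: "s \<in> {-T..0}" for s
      using abs_inner_le_mult[OF Z(2)[OF s] \<delta>(2)[OF e \<tau> s]] by (simp add: inner_diff_right)
    have difference: "((\<lambda>s. z s \<bullet> g (s + \<tau>) (x e (s + \<tau>)) e - z s \<bullet> g s (x0 s) 0) has_integral
        melnikov_along e \<tau> - melnikov_integral) {-T..0}"
      unfolding melnikov_along_def melnikov_integral_def using e(1) integrable_along[OF x0_continuous, of 0 0]
      by (intro has_integral_diff integrable_integral integrable_along x_shift_continuous) auto
    have "norm (melnikov_along e \<tau> - melnikov_integral) \<le> Z * (\<eta> / (T * Z)) * (0 - - T)"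
      by (rule has_integral_norm_bound_interval[OF difference _ integrand]) (use T_pos in simp)
    then show ?thesis
      using Z(1) T_pos by simp
  qed
  then show ?thesis
    using that \<delta>(1) by blast
qed

lemma eventually_no_hit:
  assumes "melnikov_integral \<noteq> 0"
  shows "\<exists>\<delta>>0. \<forall>e. 0 < e \<and> e \<le> 1 \<and> e < \<delta> \<longrightarrow> (\<forall>t\<in>{0..T}. x e t \<noteq> x0 0)"
proof -
  define m where "m = \<bar>melnikov_integral\<bar> / 3"
  have "m > 0"
    using assms unfolding m_def by simp
  obtain \<delta>1 where \<delta>1: "\<delta>1 > 0" "\<And>e \<tau>. e \<in> {0<..1} \<Longrightarrow> e < \<delta>1 \<Longrightarrow> \<bar>\<tau>\<bar> < \<delta>1 \<Longrightarrow>
      \<bar>melnikov_along e \<tau> - melnikov_integral\<bar> \<le> m"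
    using melnikov_along_tendsto[OF \<open>m > 0\<close>] by blast
  obtain \<delta>2 where \<delta>2: "\<delta>2 > 0" "\<And>e \<tau>. e \<in> {0<..1} \<Longrightarrow> e < \<delta>2 \<Longrightarrow> \<bar>\<tau>\<bar> \<le> T \<Longrightarrow> x e \<tau> = x0 0 \<Longrightarrow>
      (\<And>t. norm (x e t - x0 t) \<le> 1) \<Longrightarrow> \<bar>melnikov_along e \<tau>\<bar> \<le> m"
    using melnikov_along_small_after_hit[OF \<open>m > 0\<close>] by blast
  obtain \<delta>3 where \<delta>3: "\<delta>3 > 0" "\<And>e t. e \<in> {0<..1} \<Longrightarrow> e < \<delta>3 \<Longrightarrow> norm (x e t - x0 t) < 1"
    using x_uniform_convergence[of 1] by auto
  obtain \<delta>4 where \<delta>4: "\<delta>4 > 0" "\<And>e t. e \<in> {0<..1} \<Longrightarrow> e < \<delta>4 \<Longrightarrow> t \<in> {0..T} \<Longrightarrow> x e t = x0 0 \<Longrightarrow>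
      \<exists>\<tau>. \<bar>\<tau>\<bar> < min \<delta>1 T \<and> x e \<tau> = x0 0"
    using hit_near_start[of "min \<delta>1 T"] \<delta>1(1) T_pos by auto
  show ?thesis
  proof (intro exI[of _ "min (min \<delta>1 \<delta>2) (min \<delta>3 \<delta>4)"] conjI allI impI ballI notI)
    fix e t assume e: "0 < e \<and> e \<le> 1 \<and> e < min (min \<delta>1 \<delta>2) (min \<delta>3 \<delta>4)"
      and "t \<in> {0..T}" "x e t = x0 0"
    then obtain \<tau> where \<tau>: "\<bar>\<tau>\<bar> < min \<delta>1 T" "x e \<tau> = x0 0"
      using \<delta>4(2)[of e t] by auto
    have "\<bar>melnikov_along e \<tau>\<bar> \<le> m"
      using \<delta>2(2)[of e \<tau>] \<delta>3(2)[of e] e \<tau> by (auto simp: less_imp_le)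
    moreover have "\<bar>melnikov_along e \<tau> - melnikov_integral\<bar> \<le> m"
      using \<delta>1(2)[of e \<tau>] e \<tau> by auto
    ultimately show False
      using \<open>m > 0\<close> unfolding m_def by linarith
  qed (use \<delta>1(1) \<delta>2(1) \<delta>3(1) \<delta>4(1) in auto)
qed

end

theorem corollary4:
  fixes f :: "real^'n \<Rightarrow> real^'n"
    and Df :: "real^'n \<Rightarrow> real^'n^'n"
    and g :: "real \<Rightarrow> real^'n \<Rightarrow> real \<Rightarrow> real^'n"
    and x0 :: "real \<Rightarrow> real^'n"
    and x :: "real \<Rightarrow> real \<Rightarrow> real^'n"
    and z :: "real \<Rightarrow> real^'n"
    and T rho :: real
  assumes f_deriv: "\<And>y. (f has_derivative (\<lambda>h. Df y *v h)) (at y)"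
    and Df_cont: "continuous_on UNIV Df"
    and g_cont: "continuous_on (UNIV \<times> UNIV \<times> {0..1}) (\<lambda>(t, y, e). g t y e)"
    and cycle: "periodic_orbit_least f x0 T"
    and nondeg: "nondegenerate_cycle Df x0 T"
    and x_sol: "\<And>e t. e \<in> {0<..1} \<Longrightarrow>
                  ((x e) has_vector_derivative (f (x e t) + e *\<^sub>R g t (x e t) e)) (at t)"
    and x_per: "\<And>e t. e \<in> {0<..1} \<Longrightarrow> x e (t + T) = x e t"
    and x_conv: "\<And>\<epsilon>. \<epsilon> > 0 \<Longrightarrow> \<exists>\<delta>>0. \<forall>e\<in>{0<..1}. e < \<delta> \<longrightarrow>
                  (\<forall>t\<in>{0..T}. norm (x e t - x0 t) < \<epsilon>)"
    and z_eig: "eigenfunction (\<lambda>t. - transpose (Df (x0 t))) T z rho"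
    and z_nonper: "\<not> (\<forall>t. z (t + T) = z t)"
    and M_nz: "rho / (rho - 1) * integral {-T..0} (\<lambda>s. z s \<bullet> g s (x0 s) 0) \<noteq> 0"
  shows "\<exists>\<delta>>0. \<forall>e. 0 < e \<and> e \<le> 1 \<and> e < \<delta> \<longrightarrow> (\<forall>t\<in>{0..T}. x e t \<noteq> x0 0)"
proof -
  have "\<And>t. (z has_vector_derivative - transpose (Df (x0 t)) *v z t) (at t)"
    using z_eig unfolding eigenfunction_def by simp
  then interpret perturbed_limit_cycle f Df g x0 x z T
    using f_deriv Df_cont g_cont cycle x_sol x_per x_conv by unfold_locales
  have "melnikov_integral \<noteq> 0"
    using M_nz unfolding melnikov_integral_def by auto
  then show ?thesis
    by (rule eventually_no_hit)
qed

end
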